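(* For a liner $X$ the following are equivalent: (1) $X$ is weakly modular; (2) $X$ is ranked and weakly regular; (3) $X$ is ranked and for any planes $P,\Pi\subseteq X$ with $\|P\cup\Pi\|=4$, the intersection $P\cap\Pi$ is not a singleton.
   Context: A liner is a set $X$ of points with a family of subsets called lines such that any two distinct points lie in a unique line and every line contains at least two points. For distinct $x,y$, $\overline{xy}$ is the line through them. A set is flat if it contains $\overline{xy}$ for all its distinct points $x,y$; $\overline A$ is the smallest flat containing $A$. The rank $\|A\|$ is the smallest cardinality of $B\subseteq X$ with $A\subseteq\overline B$. A plane is a flat of rank $3$. $X$ is ranked if any two flats $A\subseteq B$ with $\|A\|=\|B\|<\omega$ are equal. $X$ is weakly modular if $\|A\cap B\|+\|A\cup B\|=\|A\|+\|B\|$ for all flats $A,B\subseteq X$ with $A\cap B\neq\varnothing$. $X$ is weakly regular if for every flat $A\subseteq X$ and points $a\in A$, $b\in X\setminus A$ we have $\overline{A\cup\{b\}}=\bigcup_{x\in A}\overline{\{a,b,x\}}$. *)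

theory Defs
  imports Main "HOL-Library.Extended_Nat"
begin

definition liner :: "'a set \<Rightarrow> 'a set set \<Rightarrow> bool" where
  "liner X L \<longleftrightarrow>
     (\<forall>l\<in>L. l \<subseteq> X \<and> (\<exists>x y. x \<in> l \<and> y \<in> l \<and> x \<noteq> y)) \<and>
     (\<forall>x\<in>X. \<forall>y\<in>X. x \<noteq> y \<longrightarrow> (\<exists>!l. l \<in> L \<and> x \<in> l \<and> y \<in> l))"

definition line_through :: "'a set set \<Rightarrow> 'a \<Rightarrow> 'a \<Rightarrow> 'a set" where
  "line_through L x y = (THE l. l \<in> L \<and> x \<in> l \<and> y \<in> l)"

definition flat :: "'a set \<Rightarrow> 'a set set \<Rightarrow> 'a set \<Rightarrow> bool" where
  "flat X L A \<longleftrightarrow> A \<subseteq> X \<and>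
     (\<forall>x\<in>A. \<forall>y\<in>A. x \<noteq> y \<longrightarrow> line_through L x y \<subseteq> A)"

definition hull_flat :: "'a set \<Rightarrow> 'a set set \<Rightarrow> 'a set \<Rightarrow> 'a set" where
  "hull_flat X L A = \<Inter>{F. flat X L F \<and> A \<subseteq> F}"

text \<open>Rank: smallest cardinality of B \<subseteq> X with A \<subseteq> hull B; all infinite
  cardinals are collapsed to \<infinity>.\<close>
definition rank :: "'a set \<Rightarrow> 'a set set \<Rightarrow> 'a set \<Rightarrow> enat" where
  "rank X L A =
     (if \<exists>B. finite B \<and> B \<subseteq> X \<and> A \<subseteq> hull_flat X L B
      then enat (LEAST n. \<exists>B. finite B \<and> B \<subseteq> X \<and> A \<subseteq> hull_flat X L B \<and> card B = n)
      else \<infinity>)"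

definition plane :: "'a set \<Rightarrow> 'a set set \<Rightarrow> 'a set \<Rightarrow> bool" where
  "plane X L P \<longleftrightarrow> flat X L P \<and> rank X L P = 3"

definition ranked :: "'a set \<Rightarrow> 'a set set \<Rightarrow> bool" where
  "ranked X L \<longleftrightarrow> (\<forall>A B. flat X L A \<longrightarrow> flat X L B \<longrightarrow> A \<subseteq> B \<longrightarrow>
      rank X L A = rank X L B \<longrightarrow> rank X L A < \<infinity> \<longrightarrow> A = B)"

definition weakly_modular :: "'a set \<Rightarrow> 'a set set \<Rightarrow> bool" where
  "weakly_modular X L \<longleftrightarrow> (\<forall>A B. flat X L A \<longrightarrow> flat X L B \<longrightarrow> A \<inter> B \<noteq> {} \<longrightarrow>
      rank X L (A \<inter> B) + rank X L (A \<union> B) = rank X L A + rank X L B)"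

definition weakly_regular :: "'a set \<Rightarrow> 'a set set \<Rightarrow> bool" where
  "weakly_regular X L \<longleftrightarrow> (\<forall>A a b. flat X L A \<longrightarrow> a \<in> A \<longrightarrow> b \<in> X - A \<longrightarrow>
      hull_flat X L (insert b A) = (\<Union>x\<in>A. hull_flat X L {a, b, x}))"

end

theory Submission
  imports Defs
begin

(* If X is weakly modular, applying modularity to a flat A and a
   line cl {a, b} with a \<in> A, b \<notin> A shows that adding a point raises the rank, so X is
   ranked; two planes meeting in one point would give 1 + 4 = 3 + 3.

   In a ranked liner the exchange law holds over sets of finite rank: e \<in> cl (insert x S) - cl S
   implies x \<in> cl (insert e S).  Under the plane condition, a point w of cl {a, b, x1, x2}
   (with x1, x2 in the flat A) off the line ab spans a plane Q = cl {a, b, w}, which together with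
   the plane P = cl {a, x1, x2} \<subseteq> A spans rank 4; so P and Q share a point x \<noteq> a, and
   exchange gives w \<in> cl {a, b, x}.  This makes the union of the planes cl {a, b, x}, x \<in> A, a
   flat, i.e. X is weakly regular.

   Conversely, weak regularity shows by induction on a finite F that every point of cl (A \<union> F)
   lies in cl (insert x (cl (insert c F))) for some x \<in> A, where c \<in> A is fixed.  With exchange
   this yields the modular law B \<inter> cl (A \<union> F) \<subseteq> cl ((A \<inter> B) \<union> F) for F \<subseteq> B.  Completing
   A \<inter> B to B by a finite F \<subseteq> B, each added point raises the ranks of A \<union> F and of
   (A \<inter> B) \<union> F alike, which is weak modularity. *)

locale liner_space =
  fixes X :: "'a set" and L :: "'a set set"
  assumes liner: "liner X L"
begin

abbreviation cl :: "'a set \<Rightarrow> 'a set" where "cl \<equiv> hull_flat X L"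
abbreviation rk :: "'a set \<Rightarrow> enat" where "rk \<equiv> rank X L"

lemma line_subset: "l \<in> L \<Longrightarrow> l \<subseteq> X"
  using liner unfolding liner_def by blast

lemma unique_line:
  assumes "x \<in> X" "y \<in> X" "x \<noteq> y"
  shows "\<exists>!l. l \<in> L \<and> x \<in> l \<and> y \<in> l"
  using liner assms unfolding liner_def by simp

lemma line_through:
  assumes "x \<in> X" "y \<in> X" "x \<noteq> y"
  shows "line_through L x y \<in> L" "x \<in> line_through L x y" "y \<in> line_through L x y"
proof -
  have "line_through L x y \<in> L \<and> x \<in> line_through L x y \<and> y \<in> line_through L x y"
    unfolding line_through_def using unique_line[OF assms] by (rule theI')
  then show "line_through L x y \<in> L" "x \<in> line_through L x y" "y \<in> line_through L x y"
    by auto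
qed

lemma line_through_eq:
  assumes "l \<in> L" "x \<in> l" "y \<in> l" "x \<noteq> y"
  shows "line_through L x y = l"
proof -
  have "x \<in> X" "y \<in> X"
    using assms line_subset by auto
  then show ?thesis
    unfolding line_through_def
    by (rule the1_equality[OF unique_line]) (use assms in simp_all)
qed

lemma flat_line_through:
  assumes "x \<in> X" "y \<in> X" "x \<noteq> y"
  shows "flat X L (line_through L x y)"
proof -
  have "line_through L u v = line_through L x y"
    if "u \<in> line_through L x y" "v \<in> line_through L x y" "u \<noteq> v" for u v
    using line_through_eq[OF line_through(1)[OF assms] that] .
  then show ?thesis
    unfolding flat_def using line_subset[OF line_through(1)[OF assms]] by auto
qed

lemma flat_subset: "flat X L A \<Longrightarrow> A \<subseteq> X"
  unfolding flat_def by blast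

lemma flat_line_subset:
  "flat X L A \<Longrightarrow> x \<in> A \<Longrightarrow> y \<in> A \<Longrightarrow> x \<noteq> y \<Longrightarrow> line_through L x y \<subseteq> A"
  unfolding flat_def by blast

lemma flat_space: "flat X L X"
  unfolding flat_def using line_subset[OF line_through(1)] by auto

lemma flat_empty: "flat X L {}"
  unfolding flat_def by blast

lemma flat_singleton: "p \<in> X \<Longrightarrow> flat X L {p}"
  unfolding flat_def by blast

lemma cl_minimal: "flat X L F \<Longrightarrow> S \<subseteq> F \<Longrightarrow> cl S \<subseteq> F"
  unfolding hull_flat_def by blast

lemma subset_cl: "S \<subseteq> cl S"
  unfolding hull_flat_def by blast

(* If S is not contained in X, no flat contains S and cl S = UNIV; hence the closure laws
   below need no hypothesis S \<subseteq> X. *)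
lemma cl_subset_clI: "(\<And>F. flat X L F \<Longrightarrow> S \<subseteq> F \<Longrightarrow> T \<subseteq> F) \<Longrightarrow> cl T \<subseteq> cl S"
  unfolding hull_flat_def by blast

lemma cl_mono: "S \<subseteq> T \<Longrightarrow> cl S \<subseteq> cl T"
  by (rule cl_subset_clI) blast

lemma cl_cl: "cl (cl S) = cl S"
  by (intro equalityI cl_subset_clI cl_minimal subset_cl)

lemma cl_subset_cl: "S \<subseteq> cl T \<Longrightarrow> cl S \<subseteq> cl T"
  using cl_mono cl_cl by blast

lemma cl_insert_cl: "cl (insert e (cl S)) = cl (insert e S)"
proof
  show "cl (insert e (cl S)) \<subseteq> cl (insert e S)"
    by (rule cl_subset_clI) (use cl_minimal in blast)
qed (intro cl_mono insert_mono subset_cl)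

lemma cl_insert_absorb:
  assumes "e \<in> cl S"
  shows "cl (insert e S) = cl S"
proof
  show "cl (insert e S) \<subseteq> cl S"
    by (rule cl_subset_clI) (use assms cl_minimal in blast)
qed (intro cl_mono subset_insertI)

lemma flat_cl:
  assumes "S \<subseteq> X"
  shows "flat X L (cl S)"
  unfolding flat_def
proof (intro conjI ballI impI)
  show "cl S \<subseteq> X"
    using cl_minimal[OF flat_space assms] .
  fix x y assume "x \<in> cl S" "y \<in> cl S" "x \<noteq> y"
  then show "line_through L x y \<subseteq> cl S"
    unfolding hull_flat_def using flat_line_subset by blast
qed

lemma cl_subset_space: "S \<subseteq> X \<Longrightarrow> cl S \<subseteq> X"
  using cl_minimal[OF flat_space] .

lemma cl_flat: "flat X L F \<Longrightarrow> cl F = F"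
  using cl_minimal subset_cl by blast

lemma cl_pair:
  assumes "x \<in> X" "y \<in> X" "x \<noteq> y"
  shows "cl {x, y} = line_through L x y"
proof
  show "cl {x, y} \<subseteq> line_through L x y"
    using cl_minimal[OF flat_line_through[OF assms]] line_through[OF assms] by simp
  show "line_through L x y \<subseteq> cl {x, y}"
    using flat_line_subset[OF flat_cl, of "{x, y}"] subset_cl[of "{x, y}"] assms by simp
qed

lemma cl_pair_eq:
  assumes "a \<in> X" "b \<in> X" "a \<noteq> b" "x \<in> cl {a, b}" "x \<noteq> a"
  shows "cl {a, x} = cl {a, b}"
proof -
  have "x \<in> X"
    using assms cl_subset_space[of "{a, b}"] by blast
  have "line_through L a x = line_through L a b"
    using line_through_eq[OF line_through(1)[OF assms(1-3)], of a x]
      line_through(2)[OF assms(1-3)] assms(4,5) cl_pair[OF assms(1-3)] by simp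
  then show ?thesis
    using cl_pair[OF assms(1-3)] cl_pair[OF assms(1) \<open>x \<in> X\<close>] assms(5) by simp
qed

lemma flat_Int_cl_pair:
  assumes "flat X L A" "a \<in> A" "b \<in> X - A"
  shows "A \<inter> cl {a, b} = {a}"
proof (intro equalityI subsetI)
  fix x assume x: "x \<in> A \<inter> cl {a, b}"
  have "a \<in> X" "a \<noteq> b"
    using assms flat_subset by auto
  moreover have "cl {a, x} \<subseteq> A"
    using cl_minimal[OF assms(1)] assms(2) x by simp
  ultimately show "x \<in> {a}"
    using cl_pair_eq[of a b x] subset_cl[of "{a, b}"] assms(3) x by auto
qed (use assms(2) subset_cl[of "{a, b}"] in auto)

lemma rank_le_card:
  assumes "finite B" "B \<subseteq> X" "A \<subseteq> cl B"
  shows "rk A \<le> enat (card B)"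
proof -
  have "(LEAST n. \<exists>B. finite B \<and> B \<subseteq> X \<and> A \<subseteq> cl B \<and> card B = n) \<le> card B"
    by (rule Least_le) (use assms in blast)
  then show ?thesis
    unfolding rank_def using assms by auto
qed

lemma rank_witness:
  assumes "rk A = enat n"
  obtains B where "finite B" "B \<subseteq> X" "A \<subseteq> cl B" "card B = n"
proof -
  have spanned: "\<exists>B. finite B \<and> B \<subseteq> X \<and> A \<subseteq> cl B"
    using assms unfolding rank_def by (auto split: if_splits)
  then have "\<exists>m B. finite B \<and> B \<subseteq> X \<and> A \<subseteq> cl B \<and> card B = m"
    by blast
  then have "\<exists>B. finite B \<and> B \<subseteq> X \<and> A \<subseteq> cl B \<and>
      card B = (LEAST m. \<exists>B. finite B \<and> B \<subseteq> X \<and> A \<subseteq> cl B \<and> card B = m)"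
    by (rule LeastI_ex)
  moreover have "(LEAST m. \<exists>B. finite B \<and> B \<subseteq> X \<and> A \<subseteq> cl B \<and> card B = m) = n"
    using assms spanned unfolding rank_def by simp
  ultimately show ?thesis
    using that by auto
qed

lemma rank_cl: "rk (cl S) = rk S"
proof -
  have "cl S \<subseteq> cl B \<longleftrightarrow> S \<subseteq> cl B" if "B \<subseteq> X" for B
    using cl_minimal[OF flat_cl[OF that]] subset_cl[of S] by blast
  then have "(finite B \<and> B \<subseteq> X \<and> cl S \<subseteq> cl B) = (finite B \<and> B \<subseteq> X \<and> S \<subseteq> cl B)"
    and "(finite B \<and> B \<subseteq> X \<and> cl S \<subseteq> cl B \<and> card B = n) =
      (finite B \<and> B \<subseteq> X \<and> S \<subseteq> cl B \<and> card B = n)" for B n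
    by blast+
  then show ?thesis
    unfolding rank_def by (simp only:)
qed

lemma rank_mono:
  assumes "A \<subseteq> A'"
  shows "rk A \<le> rk A'"
proof (cases "rk A'")
  case (enat n)
  then obtain B where "finite B" "B \<subseteq> X" "A' \<subseteq> cl B" "card B = n"
    by (rule rank_witness)
  then show ?thesis
    using rank_le_card[of B A] assms enat by auto
qed simp

lemma rank_Un_le:
  assumes "finite F" "F \<subseteq> X"
  shows "rk (S \<union> F) \<le> rk S + enat (card F)"
proof (cases "rk S")
  case (enat n)
  then obtain B where B: "finite B" "B \<subseteq> X" "S \<subseteq> cl B" "card B = n"
    by (rule rank_witness)
  have "S \<union> F \<subseteq> cl (B \<union> F)"
    using B(3) cl_mono[of B "B \<union> F"] subset_cl[of "B \<union> F"] by blast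
  then have "rk (S \<union> F) \<le> enat (card (B \<union> F))"
    using rank_le_card B assms by simp
  also have "card (B \<union> F) \<le> n + card F"
    using card_Un_le B(4) by metis
  finally show ?thesis
    using enat by simp
qed simp

lemma rank_empty: "rk {} = 0"
  using rank_le_card[of "{}" "{}"] by (simp add: zero_enat_def[symmetric])

lemma rank_eq_0D: "rk S = 0 \<Longrightarrow> S = {}"
  using rank_witness[of S 0] cl_flat[OF flat_empty] by (auto simp: zero_enat_def)

lemma rank_le_1D:
  assumes "rk S \<le> 1" "x \<in> S" "y \<in> S"
  shows "x = y"
proof -
  obtain n where "rk S = enat n" "n \<le> 1"
    using assms(1) by (cases "rk S") (auto simp: one_enat_def)
  then obtain B where B: "finite B" "B \<subseteq> X" "S \<subseteq> cl B" "card B \<le> 1"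
    by (metis rank_witness)
  then consider "B = {}" | p where "B = {p}"
    by (metis card_0_eq card_1_singletonE le_Suc_eq One_nat_def le_zero_eq)
  then show ?thesis
    using B assms cl_flat[OF flat_empty] cl_flat[OF flat_singleton] by cases auto
qed

lemma rank_singleton:
  assumes "p \<in> X"
  shows "rk {p} = 1"
proof -
  have "rk {p} \<le> 1"
    using rank_le_card[of "{p}" "{p}"] assms subset_cl by (simp add: one_enat_def)
  moreover have "rk {p} \<noteq> 0"
    using rank_eq_0D by blast
  ultimately show ?thesis
    by (metis antisym ileI1 not_gr_zero one_eSuc)
qed

lemma rank_pair:
  assumes "a \<in> X" "b \<in> X" "a \<noteq> b"
  shows "rk {a, b} = 2"
proof -
  have "rk {a, b} \<le> 2"
    using rank_le_card[of "{a, b}" "{a, b}"] assms subset_cl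
    by (simp add: numeral_eq_enat eval_nat_numeral)
  moreover have "\<not> rk {a, b} \<le> 1"
    using rank_le_1D[of "{a, b}" a b] assms(3) by blast
  ultimately show ?thesis
    by (cases "rk {a, b}") (auto simp: one_enat_def numeral_eq_enat)
qed

lemma rank_insert_cl:
  assumes "e \<in> cl S"
  shows "rk (insert e S) = rk S"
  by (metis assms cl_insert_absorb rank_cl)

definition rank4_planes_not_meeting_in_point :: bool where
  "rank4_planes_not_meeting_in_point \<longleftrightarrow>
     (\<forall>P Q. plane X L P \<longrightarrow> plane X L Q \<longrightarrow> rk (P \<union> Q) = 4 \<longrightarrow> \<not> (\<exists>p. P \<inter> Q = {p}))"

lemma ranked_if_weakly_modular:
  assumes "weakly_modular X L"
  shows "ranked X L"
  unfolding ranked_def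
proof (intro allI impI)
  fix A B
  assume A: "flat X L A" and B: "flat X L B" and "A \<subseteq> B"
    and rank_eq: "rk A = rk B" and "rk A < \<infinity>"
  show "A = B"
  proof (rule ccontr)
    assume "A \<noteq> B"
    then obtain b where b: "b \<in> B - A"
      using \<open>A \<subseteq> B\<close> by blast
    have "A \<noteq> {}"
      using rank_eq rank_empty rank_eq_0D[of B] b by auto
    then obtain a where a: "a \<in> A"
      by blast
    have "a \<in> X" "b \<in> X" "a \<noteq> b"
      using a b A B flat_subset by auto
    let ?l = "cl {a, b}"
    have "rk (A \<inter> ?l) + rk (A \<union> ?l) = rk A + rk ?l"
      using assms A flat_cl[of "{a, b}"] a subset_cl[of "{a, b}"] \<open>a \<in> X\<close> \<open>b \<in> X\<close>
      unfolding weakly_modular_def by blast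
    then have "1 + rk (A \<union> ?l) = rk A + 2"
      using flat_Int_cl_pair[OF A a] b \<open>a \<in> X\<close> \<open>b \<in> X\<close> \<open>a \<noteq> b\<close>
        rank_singleton rank_cl rank_pair by simp
    moreover have "rk (A \<union> ?l) \<le> rk B"
      using cl_minimal[OF B, of "{a, b}"] a b \<open>A \<subseteq> B\<close> by (intro rank_mono) auto
    ultimately show False
      using rank_eq \<open>rk A < \<infinity>\<close>
      by (cases "rk A"; cases "rk (A \<union> ?l)") (auto simp: one_enat_def numeral_eq_enat)
  qed
qed

lemma rank4_planes_not_meeting_in_point_if_weakly_modular:
  assumes "weakly_modular X L"
  shows rank4_planes_not_meeting_in_point
  unfolding rank4_planes_not_meeting_in_point_def
proof (intro allI impI notI)
  fix P Q
  assume P: "plane X L P" and Q: "plane X L Q" and "rk (P \<union> Q) = 4" and "\<exists>p. P \<inter> Q = {p}"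
  then obtain p where p: "P \<inter> Q = {p}"
    by blast
  have "p \<in> X"
    using p P flat_subset unfolding plane_def by blast
  have "rk (P \<inter> Q) + rk (P \<union> Q) = rk P + rk Q"
    using assms P Q p unfolding weakly_modular_def plane_def by blast
  then show False
    using p rank_singleton[OF \<open>p \<in> X\<close>] \<open>rk (P \<union> Q) = 4\<close> P Q unfolding plane_def by simp
qed

lemma cl_insert_eq_UN_if_quadruples:
  assumes A: "flat X L A" "a \<in> A" and b: "b \<in> X"
    and quadruples: "\<And>x y. x \<in> A \<Longrightarrow> y \<in> A \<Longrightarrow> cl {a, b, x, y} \<subseteq> (\<Union>z\<in>A. cl {a, b, z})"
  shows "cl (insert b A) = (\<Union>x\<in>A. cl {a, b, x})"
proof
  show "(\<Union>x\<in>A. cl {a, b, x}) \<subseteq> cl (insert b A)"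
    using A(2) by (intro UN_least cl_mono) auto
  let ?U = "\<Union>x\<in>A. cl {a, b, x}"
  have "flat X L ?U"
    unfolding flat_def
  proof (intro conjI ballI impI)
    have "cl {a, b, x} \<subseteq> X" if "x \<in> A" for x
      using A b that flat_subset by (intro cl_subset_space) auto
    then show "?U \<subseteq> X"
      by blast
    fix y z
    assume "y \<in> ?U" "z \<in> ?U" "y \<noteq> z"
    then obtain x1 x2 where x: "x1 \<in> A" "x2 \<in> A" "y \<in> cl {a, b, x1}" "z \<in> cl {a, b, x2}"
      by blast
    have "{a, b, x1, x2} \<subseteq> X"
      using A b x flat_subset by auto
    moreover have "y \<in> cl {a, b, x1, x2}" "z \<in> cl {a, b, x1, x2}"
      using x cl_mono[of "{a, b, x1}" "{a, b, x1, x2}"] cl_mono[of "{a, b, x2}" "{a, b, x1, x2}"]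
      by auto
    ultimately have "line_through L y z \<subseteq> cl {a, b, x1, x2}"
      using \<open>y \<noteq> z\<close> by (intro flat_line_subset flat_cl)
    then show "line_through L y z \<subseteq> ?U"
      using quadruples[OF x(1,2)] by blast
  qed
  moreover have "insert b A \<subseteq> ?U"
    using A(2) subset_cl[of "{a, b, a}"] subset_cl[of "{a, b, x}" for x] by blast
  ultimately show "cl (insert b A) \<subseteq> ?U"
    by (rule cl_minimal)
qed

lemma cl_Un_finite_subset_UN:
  assumes wr: "weakly_regular X L" and A: "flat X L A" "c \<in> A"
    and F: "finite F" "F \<subseteq> X"
  shows "cl (A \<union> F) \<subseteq> (\<Union>x\<in>A. cl (insert x (cl (insert c F))))"
  using F
proof (induction F rule: finite_induct)
  case empty
  have "z \<in> cl (insert z (cl {c}))" for z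
    using subset_cl by blast
  then show ?case
    using cl_flat[OF A(1)] by auto
next
  case (insert e F)
  let ?D = "cl (A \<union> F)"
  let ?N = "cl (insert c (insert e F))"
  have IH: "?D \<subseteq> (\<Union>x\<in>A. cl (insert x (cl (insert c F))))"
    using insert by simp
  have N_mono: "cl (insert x (cl (insert c F))) \<subseteq> cl (insert x ?N)" for x
    by (intro cl_mono insert_mono) auto
  have cl_step: "cl (A \<union> insert e F) = cl (insert e ?D)"
    using cl_insert_cl[of e "A \<union> F"] by simp
  show ?case
  proof
    fix z
    assume z: "z \<in> cl (A \<union> insert e F)"
    show "z \<in> (\<Union>x\<in>A. cl (insert x ?N))"
    proof (cases "e \<in> ?D")
      case True
      then have "z \<in> ?D"
        using z cl_step cl_insert_absorb cl_cl by simp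
      then show ?thesis
        using IH N_mono by blast
    next
      case False
      have "A \<union> F \<subseteq> X"
        using A(1) flat_subset insert.prems by auto
      moreover have "c \<in> ?D"
        using A(2) subset_cl[of "A \<union> F"] by blast
      ultimately have "cl (insert e ?D) = (\<Union>w\<in>?D. cl {c, e, w})"
        using wr flat_cl False insert.prems unfolding weakly_regular_def by simp
      then obtain w where w: "w \<in> ?D" "z \<in> cl {c, e, w}"
        using z cl_step by auto
      then obtain x where x: "x \<in> A" "w \<in> cl (insert x (cl (insert c F)))"
        using IH by blast
      have "{c, e} \<subseteq> cl (insert x ?N)"
        using subset_cl[of "insert c (insert e F)"] subset_cl[of "insert x ?N"] by blast
      moreover have "w \<in> cl (insert x ?N)"
        using x(2) N_mono by blast
      ultimately have "{c, e, w} \<subseteq> cl (insert x ?N)"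
        by simp
      then have "z \<in> cl (insert x ?N)"
        using w(2) cl_subset_cl by blast
      then show ?thesis
        using x(1) by blast
    qed
  qed
qed

end

locale ranked_liner = liner_space +
  assumes ranked: "ranked X L"
begin

lemma flat_eq_if_rank_le:
  assumes "flat X L A" "flat X L B" "A \<subseteq> B" "rk B \<le> rk A" "rk A \<noteq> \<infinity>"
  shows "A = B"
  using ranked assms rank_mono[OF assms(3)] unfolding ranked_def by auto

lemma rank_insert:
  assumes "S \<subseteq> X" "e \<in> X - cl S"
  shows "rk (insert e S) = eSuc (rk S)"
proof (cases "rk S")
  case (enat n)
  have "rk (insert e S) \<le> eSuc (rk S)"
    using rank_Un_le[of "{e}" S] assms by (simp add: eSuc_plus_1 one_enat_def)
  moreover have "rk S \<le> rk (insert e S)"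
    by (rule rank_mono) blast
  moreover have "rk (insert e S) \<noteq> rk S"
  proof
    assume "rk (insert e S) = rk S"
    then have "cl S = cl (insert e S)"
      using assms enat by (intro flat_eq_if_rank_le flat_cl cl_mono) (auto simp: rank_cl)
    then show False
      using assms subset_cl[of "insert e S"] by blast
  qed
  ultimately show ?thesis
    using enat by (cases "rk (insert e S)") (auto simp: eSuc_enat)
next
  case infinity
  then show ?thesis
    using rank_mono[of S "insert e S"] by auto
qed

lemma rank_triple:
  assumes "c \<in> X" "x \<in> X" "y \<in> X" "x \<noteq> c" "y \<notin> cl {c, x}"
  shows "rk {c, x, y} = 3"
proof -
  have "rk (insert y {c, x}) = eSuc 2"
    using rank_insert[of "{c, x}" y] rank_pair[of c x] assms by simp
  then show ?thesis
    by (simp add: insert_commute eSuc_numeral)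
qed

lemma cl_exchange:
  assumes "S \<subseteq> X" "rk S \<noteq> \<infinity>" "x \<in> X" "e \<in> cl (insert x S) - cl S"
  shows "x \<in> cl (insert e S)"
proof -
  have "x \<notin> cl S"
    using assms(4) cl_insert_absorb by auto
  have "e \<in> X"
    using assms cl_subset_space[of "insert x S"] by blast
  have "cl (insert e S) \<subseteq> cl (insert x S)"
    using assms(4) subset_cl[of "insert x S"] by (intro cl_subset_cl) blast
  moreover have "rk (cl (insert e S)) = rk (cl (insert x S))"
    using assms \<open>x \<notin> cl S\<close> \<open>e \<in> X\<close> by (simp add: rank_cl rank_insert)
  moreover have "rk (cl (insert e S)) \<noteq> \<infinity>"
    using assms \<open>e \<in> X\<close> by (auto simp: rank_cl rank_insert eSuc_enat)
  ultimately have "cl (insert e S) = cl (insert x S)"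
    using assms \<open>e \<in> X\<close> by (intro flat_eq_if_rank_le flat_cl) auto
  then show ?thesis
    using subset_cl by blast
qed

lemma flat_eq_cl_Un_finite:
  assumes B: "flat X L B" "rk B \<noteq> \<infinity>" and "S \<subseteq> B"
  obtains F where "finite F" "F \<subseteq> B" "cl (S \<union> F) = B"
proof -
  obtain n where n: "rk B = enat n"
    using B(2) by auto
  have "\<exists>F. finite F \<and> F \<subseteq> B \<and> cl (S \<union> F) = B" if "S \<subseteq> B" "rk S = enat m" for S m
    using that
  proof (induction "n - m" arbitrary: S m rule: less_induct)
    case less
    show ?case
    proof (cases "B \<subseteq> cl S")
      case True
      then have "cl (S \<union> {}) = B"
        using cl_minimal[OF B(1) less.prems(1)] by auto
      then show ?thesis
        by blast
    next
      case False
      then obtain e where e: "e \<in> B" "e \<notin> cl S"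
        by blast
      have "S \<subseteq> X" "e \<in> X"
        using flat_subset[OF B(1)] less.prems(1) e(1) by auto
      then have rank_e: "rk (insert e S) = enat (Suc m)"
        using rank_insert e(2) less.prems(2) by (simp add: eSuc_enat)
      moreover have "rk (insert e S) \<le> rk B"
        using e(1) less.prems(1) by (intro rank_mono) blast
      ultimately have "n - Suc m < n - m"
        using n by simp
      then obtain F where "finite F" "F \<subseteq> B" "cl (insert e S \<union> F) = B"
        using less.hyps[OF _ _ rank_e] e(1) less.prems(1) by blast
      then show ?thesis
        using e(1) by (intro exI[of _ "insert e F"]) auto
    qed
  qed
  moreover obtain m where "rk S = enat m"
    using rank_mono[OF \<open>S \<subseteq> B\<close>] n by (cases "rk S") auto
  ultimately show ?thesis
    using that \<open>S \<subseteq> B\<close> by blast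
qed

lemma modular_law:
  assumes wr: "weakly_regular X L" and A: "flat X L A" and B: "flat X L B" and c: "c \<in> A \<inter> B"
    and F: "finite F" "F \<subseteq> B"
  shows "B \<inter> cl (A \<union> F) \<subseteq> cl ((A \<inter> B) \<union> F)"
proof
  fix e
  assume e: "e \<in> B \<inter> cl (A \<union> F)"
  let ?N = "cl (insert c F)"
  let ?G = "cl ((A \<inter> B) \<union> F)"
  have "F \<subseteq> X"
    using F(2) flat_subset[OF B] by blast
  then obtain x where x: "x \<in> A" "e \<in> cl (insert x ?N)"
    using cl_Un_finite_subset_UN[OF wr A(1) _ F(1)] c e by blast
  have N_G: "?N \<subseteq> ?G"
    using c by (intro cl_mono) auto
  have G_B: "?G \<subseteq> B"
    using F(2) by (intro cl_minimal[OF B]) auto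
  show "e \<in> ?G"
  proof (rule ccontr)
    assume "e \<notin> ?G"
    have "insert c F \<subseteq> X"
      using c F(2) flat_subset[OF B] by blast
    moreover have "rk ?N \<noteq> \<infinity>"
      using rank_le_card[of "insert c F" "insert c F"] F(1) \<open>insert c F \<subseteq> X\<close> subset_cl
      by (cases "rk (insert c F)") (auto simp: rank_cl)
    moreover have "x \<in> X"
      using x(1) flat_subset[OF A] by blast
    moreover have "e \<in> cl (insert x ?N) - cl ?N"
      using x(2) \<open>e \<notin> ?G\<close> N_G cl_cl by auto
    ultimately have "x \<in> cl (insert e ?N)"
      using cl_exchange[of ?N x e] cl_subset_space by (simp add: rank_cl)
    moreover have "cl (insert e ?N) \<subseteq> B"
      using e N_G G_B by (intro cl_minimal[OF B]) auto
    ultimately have "x \<in> A \<inter> B"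
      using x(1) by blast
    then have "cl (insert x ?N) \<subseteq> ?G"
      using N_G subset_cl[of "(A \<inter> B) \<union> F"] by (intro cl_subset_cl) blast
    then show False
      using x(2) \<open>e \<notin> ?G\<close> by blast
  qed
qed

lemma rank_Un_finite_add:
  assumes wr: "weakly_regular X L" and A: "flat X L A" and B: "flat X L B" and c: "c \<in> A \<inter> B"
    and F: "finite F" "F \<subseteq> B"
  shows "rk (A \<union> F) + rk (A \<inter> B) = rk A + rk ((A \<inter> B) \<union> F)"
  using F
proof (induction F rule: finite_induct)
  case empty
  then show ?case
    by (simp add: add.commute)
next
  case (insert e F)
  let ?C = "A \<inter> B"
  have IH: "rk (A \<union> F) + rk ?C = rk A + rk (?C \<union> F)"
    using insert by simp
  have "A \<union> F \<subseteq> X" "?C \<union> F \<subseteq> X" "e \<in> X"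
    using A B insert.prems flat_subset by auto
  show ?case
  proof (cases "e \<in> cl (?C \<union> F)")
    case True
    then have "e \<in> cl (A \<union> F)"
      using cl_mono[of "?C \<union> F" "A \<union> F"] by blast
    then show ?thesis
      using IH True rank_insert_cl by simp
  next
    case False
    then have "e \<notin> cl (A \<union> F)"
      using modular_law[OF wr A B c insert.hyps(1)] insert.prems by blast
    then show ?thesis
      using IH False rank_insert \<open>A \<union> F \<subseteq> X\<close> \<open>?C \<union> F \<subseteq> X\<close> \<open>e \<in> X\<close>
      by (simp add: iadd_Suc iadd_Suc_right)
  qed
qed

lemma weakly_modular_if_weakly_regular:
  assumes wr: "weakly_regular X L"
  shows "weakly_modular X L"
  unfolding weakly_modular_def
proof (intro allI impI)
  fix A B
  assume A: "flat X L A" and B: "flat X L B" and "A \<inter> B \<noteq> {}"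
  then obtain c where c: "c \<in> A \<inter> B"
    by blast
  show "rk (A \<inter> B) + rk (A \<union> B) = rk A + rk B"
  proof (cases "rk B = \<infinity>")
    case True
    then have "rk (A \<union> B) = \<infinity>"
      using rank_mono[of B "A \<union> B"] by auto
    then show ?thesis
      using True by simp
  next
    case False
    obtain F where F: "finite F" "F \<subseteq> B" "cl ((A \<inter> B) \<union> F) = B"
      using flat_eq_cl_Un_finite[OF B False Int_lower2] .
    have "cl ((A \<inter> B) \<union> F) \<subseteq> cl (A \<union> F)"
      by (intro cl_mono) blast
    then have "A \<union> B \<subseteq> cl (A \<union> F)"
      using F(3) subset_cl[of "A \<union> F"] by blast
    then have "cl (A \<union> B) \<subseteq> cl (A \<union> F)"
      by (rule cl_subset_cl)
    moreover have "cl (A \<union> F) \<subseteq> cl (A \<union> B)"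
      using F(2) by (intro cl_mono) blast
    ultimately have "rk (A \<union> F) = rk (A \<union> B)"
      using rank_cl[of "A \<union> F"] rank_cl[of "A \<union> B"] by simp
    moreover have "rk ((A \<inter> B) \<union> F) = rk B"
      using F(3) rank_cl[of "(A \<inter> B) \<union> F"] by simp
    ultimately show ?thesis
      using rank_Un_finite_add[OF wr A B c F(1,2)] by (simp add: add.commute)
  qed
qed

lemma point_of_cl_insert_plane:
  assumes pc: rank4_planes_not_meeting_in_point and A: "flat X L A" and b: "b \<in> X - A"
    and P: "plane X L P" "P \<subseteq> A" "a \<in> P" and w: "w \<in> cl (insert b P)"
  shows "\<exists>x\<in>A. w \<in> cl {a, b, x}"
proof (cases "w \<in> cl {a, b}")
  case True
  moreover have "{a, b, a} = {a, b}"
    by blast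
  ultimately show ?thesis
    using P(2,3) by (intro bexI[of _ a]) auto
next
  case False
  have "P \<subseteq> X" "flat X L P" "rk P = 3"
    using P(1) flat_subset unfolding plane_def by auto
  have "a \<in> X" "a \<noteq> b" "w \<in> X"
    using P b \<open>P \<subseteq> X\<close> w cl_subset_space[of "insert b P"] by auto
  let ?Q = "cl {a, b, w}"
  have "plane X L ?Q"
    using \<open>a \<in> X\<close> b \<open>a \<noteq> b\<close> \<open>w \<in> X\<close> False
    unfolding plane_def by (auto simp: flat_cl rank_cl rank_triple)
  have rank_bP: "rk (insert b P) = 4"
    using rank_insert[of P b] b P(2) \<open>P \<subseteq> X\<close> \<open>rk P = 3\<close> cl_flat[OF \<open>flat X L P\<close>]
    by (auto simp: eSuc_numeral)
  have "{a, b, w} \<subseteq> cl (insert b P)"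
    using P(3) w subset_cl[of "insert b P"] by blast
  then have "P \<union> ?Q \<subseteq> cl (insert b P)"
    using subset_cl[of "insert b P"] cl_subset_cl[of "{a, b, w}"] by blast
  then have "rk (P \<union> ?Q) \<le> 4"
    using rank_mono rank_cl[of "insert b P"] rank_bP by metis
  moreover have "rk (insert b P) \<le> rk (P \<union> ?Q)"
    using subset_cl[of "{a, b, w}"] by (intro rank_mono) auto
  ultimately have "rk (P \<union> ?Q) = 4"
    using rank_bP by simp
  then have "\<not> (\<exists>p. P \<inter> ?Q = {p})"
    using pc P(1) \<open>plane X L ?Q\<close> unfolding rank4_planes_not_meeting_in_point_def by blast
  moreover have "a \<in> P \<inter> ?Q"
    using P(3) subset_cl[of "{a, b, w}"] by blast
  ultimately obtain x where x: "x \<in> P \<inter> ?Q" "x \<noteq> a"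
    by blast
  have "x \<in> A" "x \<notin> cl {a, b}"
    using x P(2,3) flat_Int_cl_pair[OF A, of a b] b by auto
  then have "x \<in> cl (insert w {a, b}) - cl {a, b}"
    using x(1) by (simp add: insert_commute)
  then have "w \<in> cl (insert x {a, b})"
    using cl_exchange[of "{a, b}" w x] \<open>a \<in> X\<close> b \<open>w \<in> X\<close> \<open>a \<noteq> b\<close> rank_pair by auto
  then show ?thesis
    using \<open>x \<in> A\<close> by (auto simp: insert_commute)
qed

lemma cl_quadruple_subset_UN:
  assumes pc: rank4_planes_not_meeting_in_point and A: "flat X L A" "a \<in> A" and b: "b \<in> X - A"
    and xy: "x \<in> A" "y \<in> A"
  shows "cl {a, b, x, y} \<subseteq> (\<Union>z\<in>A. cl {a, b, z})"
proof -
  have "a \<in> X" "x \<in> X" "y \<in> X"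
    using A xy flat_subset by auto
  consider "x = a" | "x \<noteq> a" "y \<in> cl {a, x}" | "x \<noteq> a" "y \<notin> cl {a, x}"
    by blast
  then show ?thesis
  proof cases
    case 1
    then have "{a, b, x, y} = {a, b, y}"
      by auto
    then show ?thesis
      using UN_upper[OF xy(2), of "\<lambda>z. cl {a, b, z}"] by simp
  next
    case 2
    then have "y \<in> cl {a, b, x}"
      using cl_mono[of "{a, x}" "{a, b, x}"] by auto
    then have "cl {a, b, x, y} = cl {a, b, x}"
      using cl_insert_absorb[of y "{a, b, x}"] by (simp add: insert_commute)
    then show ?thesis
      using UN_upper[OF xy(1), of "\<lambda>z. cl {a, b, z}"] by simp
  next
    case 3
    let ?P = "cl {a, x, y}"
    have "plane X L ?P"
      using 3 \<open>a \<in> X\<close> \<open>x \<in> X\<close> \<open>y \<in> X\<close>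
      unfolding plane_def by (auto simp: flat_cl rank_cl rank_triple)
    moreover have "?P \<subseteq> A"
      using A xy by (intro cl_minimal) auto
    moreover have "a \<in> ?P"
      using subset_cl[of "{a, x, y}"] by blast
    moreover have "cl {a, b, x, y} = cl (insert b ?P)"
      using cl_insert_cl[of b "{a, x, y}"] by (simp add: insert_commute)
    ultimately show ?thesis
      using point_of_cl_insert_plane[OF pc A(1) b] by fastforce
  qed
qed

lemma weakly_regular_if_rank4_planes_not_meeting_in_point:
  assumes rank4_planes_not_meeting_in_point
  shows "weakly_regular X L"
  unfolding weakly_regular_def
proof (intro allI impI)
  fix A a b
  assume "flat X L A" "a \<in> A" "b \<in> X - A"
  then show "cl (insert b A) = (\<Union>x\<in>A. cl {a, b, x})"
    using cl_quadruple_subset_UN[OF assms] by (intro cl_insert_eq_UN_if_quadruples) auto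
qed

end

theorem theorem5p4p1:
  assumes "liner X L"
  shows "(weakly_modular X L \<longleftrightarrow> ranked X L \<and> weakly_regular X L) \<and>
         (ranked X L \<and> weakly_regular X L \<longleftrightarrow>
            ranked X L \<and> (\<forall>P Q. plane X L P \<longrightarrow> plane X L Q \<longrightarrow>
                rank X L (P \<union> Q) = 4 \<longrightarrow> \<not> (\<exists>p. P \<inter> Q = {p})))"
proof -
  interpret liner_space X L
    by (rule liner_space.intro) (fact assms)
  have ranked_liner: "ranked_liner X L" if "ranked X L"
    using assms that by (intro ranked_liner.intro ranked_liner_axioms.intro liner_space.intro)
  have "weakly_modular X L \<longleftrightarrow> ranked X L \<and> weakly_regular X L"
    using ranked_if_weakly_modular rank4_planes_not_meeting_in_point_if_weakly_modular
      ranked_liner.weakly_regular_if_rank4_planes_not_meeting_in_point[OF ranked_liner]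
      ranked_liner.weakly_modular_if_weakly_regular[OF ranked_liner]
    by blast
  moreover have "ranked X L \<and> weakly_regular X L \<longleftrightarrow> ranked X L \<and> rank4_planes_not_meeting_in_point"
    using calculation rank4_planes_not_meeting_in_point_if_weakly_modular
      ranked_liner.weakly_regular_if_rank4_planes_not_meeting_in_point[OF ranked_liner]
    by blast
  ultimately show ?thesis
    unfolding rank4_planes_not_meeting_in_point_def by blast
qed

end
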